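(* Let $A=A_1\otimes A_2$ and let $\{U_1,\dots,U_L\}$ be a $(k,\varepsilon)$-QC-extractor on $A$ with $k\le\log|A|-1$. Then $L\ge 1/\varepsilon$.
   Context: All Hilbert spaces are finite-dimensional; $\log$ is base 2; $n=\log|A|$. For $\rho_{AB}$ and $\sigma_B$ a density operator, $H_{\min}(A|B)_{\rho|\sigma}=\max\{\lambda: 2^{-\lambda}\mathbb I_A\otimes\sigma_B\ge\rho_{AB}\}$ and $H_{\min}(A|B)_\rho=\max_{\sigma_B}H_{\min}(A|B)_{\rho|\sigma}$. Fix computational bases $\{|a_1\rangle\}$ of $A_1$, $\{|a_2\rangle\}$ of $A_2$; $\mathcal T_{A\to A_1}(X)=\sum_{a_1,a_2}\langle a_1a_2|X|a_1a_2\rangle|a_1\rangle\langle a_1|$. For $k\in[-n,n]$, $\varepsilon\in[0,1]$, a $(k,\varepsilon)$-QC-extractor is a set $\{U_1,\dots,U_L\}$ of unitaries on $A$ such that for every finite-dimensional $E$ and every density operator $\rho_{AE}$ with $H_{\min}(A|E)_\rho\ge k$, $\frac1L\sum_i\|\mathcal T(U_i\rho_{AE}U_i^\dagger)-\frac{\mathbb I_{A_1}}{|A_1|}\otimes\rho_E\|_1\le\varepsilon$. *)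

theory Defs
  imports "Jordan_Normal_Form.Char_Poly"
begin

(* Operators on finite-dimensional Hilbert spaces C^d are complex d x d matrices.
   Tensor products use the Kronecker product; multi-index (a1,a2,e) of
   A1 (x) A2 (x) E is encoded as (a1 * |A2| + a2) * |E| + e. *)

definition adj :: "complex mat \<Rightarrow> complex mat" where
  "adj X = mat (dim_col X) (dim_row X) (\<lambda>(i,j). cnj (X $$ (j,i)))"

definition tr :: "complex mat \<Rightarrow> complex" where
  "tr X = (\<Sum>i<dim_row X. X $$ (i,i))"

definition kron :: "complex mat \<Rightarrow> complex mat \<Rightarrow> complex mat" where
  "kron X Y = mat (dim_row X * dim_row Y) (dim_col X * dim_col Y)
     (\<lambda>(i,j). X $$ (i div dim_row Y, j div dim_col Y) * Y $$ (i mod dim_row Y, j mod dim_col Y))"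

definition psd :: "nat \<Rightarrow> complex mat \<Rightarrow> bool" where
  "psd d M \<longleftrightarrow> M \<in> carrier_mat d d \<and>
     (\<forall>v \<in> carrier_vec d. let z = (\<Sum>i<d. \<Sum>j<d. cnj (v $ i) * M $$ (i,j) * v $ j)
                           in Im z = 0 \<and> Re z \<ge> 0)"

definition density :: "nat \<Rightarrow> complex mat \<Rightarrow> bool" where
  "density d M \<longleftrightarrow> psd d M \<and> tr M = 1"

definition unitary :: "nat \<Rightarrow> complex mat \<Rightarrow> bool" where
  "unitary d U \<longleftrightarrow> U \<in> carrier_mat d d \<and> U * adj U = 1\<^sub>m d \<and> adj U * U = 1\<^sub>m d"

(* Schatten 1-norm: sum of the singular values, i.e. of the square roots of the
   eigenvalues (with algebraic multiplicity) of X^dagger X *)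
definition trace_norm :: "complex mat \<Rightarrow> real" where
  "trace_norm X = (let p = char_poly (adj X * X) in
     (\<Sum>z \<in> {z. poly p z = 0}. real (order z p) * sqrt (Re z)))"

(* conditional min-entropy H_min(A|E)_rho for rho on A (x) E, |A| = dA, |E| = dE:
   supremum of lambda over all density sigma_E with 2^-lambda I_A (x) sigma_E >= rho *)
definition hmin :: "nat \<Rightarrow> nat \<Rightarrow> complex mat \<Rightarrow> real" where
  "hmin dA dE \<rho> = Sup {lam. \<exists>\<sigma>. density dE \<sigma> \<and>
      psd (dA * dE) (complex_of_real (2 powr (- lam)) \<cdot>\<^sub>m kron (1\<^sub>m dA) \<sigma> - \<rho>)}"

definition ptrace_A :: "nat \<Rightarrow> nat \<Rightarrow> complex mat \<Rightarrow> complex mat" where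
  "ptrace_A dA dE X = mat dE dE (\<lambda>(e,e'). \<Sum>a<dA. X $$ (a * dE + e, a * dE + e'))"

(* (T_{A -> A1} (x) id_E) X : measure A1 in the computational basis, trace out A2 *)
definition T_map :: "nat \<Rightarrow> nat \<Rightarrow> nat \<Rightarrow> complex mat \<Rightarrow> complex mat" where
  "T_map d1 d2 dE X = mat (d1 * dE) (d1 * dE) (\<lambda>(i,j).
     if i div dE = j div dE
     then (\<Sum>a2<d2. X $$ (((i div dE) * d2 + a2) * dE + i mod dE,
                          ((j div dE) * d2 + a2) * dE + j mod dE))
     else 0)"

definition qc_extractor :: "nat \<Rightarrow> nat \<Rightarrow> real \<Rightarrow> real \<Rightarrow> complex mat list \<Rightarrow> bool" where
  "qc_extractor d1 d2 k \<epsilon> Us \<longleftrightarrow>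
     (let n = log 2 (real (d1 * d2)) in - n \<le> k \<and> k \<le> n) \<and> 0 \<le> \<epsilon> \<and> \<epsilon> \<le> 1 \<and>
     Us \<noteq> [] \<and> (\<forall>U \<in> set Us. unitary (d1 * d2) U) \<and>
     (\<forall>(dE::nat) \<rho>. density (d1 * d2 * dE) \<rho> \<and> hmin (d1 * d2) dE \<rho> \<ge> k \<longrightarrow>
        (1 / real (length Us)) *
          (\<Sum>U \<leftarrow> Us. trace_norm
             (T_map d1 d2 dE (kron U (1\<^sub>m dE) * \<rho> * adj (kron U (1\<^sub>m dE)))
              - kron ((1 / of_nat d1) \<cdot>\<^sub>m 1\<^sub>m d1) (ptrace_A (d1 * d2) dE \<rho>)))
        \<le> \<epsilon>)"

end

theory Submission
  imports Defs
begin

text \<open>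
  Let U be the first unitary of the extractor, let E be a qubit and
  \<tau> = |A|^-1 sum_a |a><a| (x) |phi_a1><phi_a1|, where phi_j = (|0> + w^j |1>) / sqrt 2 for a
  primitive |A1|-th root of unity w. Since \<tau> <= |A|^-1 1 = 2^-(log |A| - 1) 1_A (x) 1_E / 2,
  the state \<rho> = (U (x) 1)^* \<tau> (U (x) 1) has H_min(A|E) >= log |A| - 1 >= k, so the
  extractor must handle it. But U maps \<rho> back to \<tau>, where E records the outcome a1 of
  measuring A1 in the qubit state phi_a1, whereas the marginal of E is 1_E / 2 because the
  roots of unity sum to zero. The difference from the ideal output has trace norm exactly 1,
  and the other unitaries contribute nonnegative terms to the average, so 1 / L <= epsilon.
\<close>

lemma sum_lessThan_mult:
  fixes m n :: nat
  shows "(\<Sum>i<m * n. f i) = (\<Sum>x<m. \<Sum>y<n. f (x * n + y) :: 'a :: comm_monoid_add)"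
  by (simp add: sum.nat_group[symmetric] sum.atLeastLessThan_shift_0 atLeast0LessThan comp_def)

lemma mult_add_less_mult: "x < m \<Longrightarrow> y < n \<Longrightarrow> x * n + y < m * (n :: nat)"
proof -
  assume "x < m" "y < n"
  then have "x * n + y < Suc x * n" by simp
  also have "\<dots> \<le> m * n" using \<open>x < m\<close> by (intro mult_right_mono) auto
  finally show ?thesis .
qed

lemma div_mod_less_mult:
  assumes "i < m * (n :: nat)" shows "i div n < m" "i mod n < n"
proof -
  have "n > 0" using assms by (auto intro: gr0I)
  then show "i div n < m" "i mod n < n"
    using assms by (auto simp: less_mult_imp_div_less mult.commute)
qed

lemma adj_dims [simp]: "dim_row (adj A) = dim_col A" "dim_col (adj A) = dim_row A"
  by (simp_all add: adj_def)

lemma adj_index [simp]: "i < dim_col A \<Longrightarrow> j < dim_row A \<Longrightarrow> adj A $$ (i, j) = cnj (A $$ (j, i))"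
  by (simp add: adj_def)

lemma adj_carrier [simp]: "A \<in> carrier_mat n m \<Longrightarrow> adj A \<in> carrier_mat m n"
  unfolding carrier_mat_def by simp

lemma adj_one [simp]: "adj (1\<^sub>m n) = 1\<^sub>m n"
  by (rule eq_matI) auto

lemma kron_dims [simp]:
  "dim_row (kron A B) = dim_row A * dim_row B" "dim_col (kron A B) = dim_col A * dim_col B"
  by (simp_all add: kron_def)

lemma kron_carrier [simp]:
  "A \<in> carrier_mat n1 n2 \<Longrightarrow> B \<in> carrier_mat m1 m2 \<Longrightarrow> kron A B \<in> carrier_mat (n1 * m1) (n2 * m2)"
  unfolding carrier_mat_def by simp

lemma kron_index:
  "i < dim_row A * dim_row B \<Longrightarrow> j < dim_col A * dim_col B \<Longrightarrow>
   kron A B $$ (i, j) = A $$ (i div dim_row B, j div dim_col B) * B $$ (i mod dim_row B, j mod dim_col B)"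
  by (simp add: kron_def)

lemma kron_mult:
  assumes A: "A \<in> carrier_mat n1 n2" and B: "B \<in> carrier_mat m1 m2"
    and C: "C \<in> carrier_mat n2 n3" and D: "D \<in> carrier_mat m2 m3"
  shows "kron A B * kron C D = kron (A * C) (B * D)"
proof (rule eq_matI)
  fix i j assume "i < dim_row (kron (A * C) (B * D))" "j < dim_col (kron (A * C) (B * D))"
  then have i: "i < n1 * m1" and j: "j < n3 * m3" using A B C D by auto
  have "(kron A B * kron C D) $$ (i, j) = (\<Sum>k<n2 * m2. kron A B $$ (i, k) * kron C D $$ (k, j))"
    using A B C D i j by (simp add: scalar_prod_def lessThan_atLeast0)
  also have "\<dots> = (\<Sum>x<n2. \<Sum>y<m2. (A $$ (i div m1, x) * C $$ (x, j div m3)) * (B $$ (i mod m1, y) * D $$ (y, j mod m3)))"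
    unfolding sum_lessThan_mult
  proof (intro sum.cong refl)
    fix x y assume "x \<in> {..<n2}" "y \<in> {..<m2}"
    then have "x * m2 + y < n2 * m2" "(x * m2 + y) div m2 = x" "(x * m2 + y) mod m2 = y"
      by (auto intro: mult_add_less_mult)
    then show "kron A B $$ (i, x * m2 + y) * kron C D $$ (x * m2 + y, j) =
        (A $$ (i div m1, x) * C $$ (x, j div m3)) * (B $$ (i mod m1, y) * D $$ (y, j mod m3))"
      using A B C D i j by (simp add: kron_index mult_ac)
  qed
  also have "\<dots> = (\<Sum>x<n2. A $$ (i div m1, x) * C $$ (x, j div m3)) * (\<Sum>y<m2. B $$ (i mod m1, y) * D $$ (y, j mod m3))"
    by (simp add: sum_product)
  also have "\<dots> = kron (A * C) (B * D) $$ (i, j)"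
    using A B C D i j div_mod_less_mult[OF i] div_mod_less_mult[OF j]
    by (simp add: kron_index scalar_prod_def lessThan_atLeast0)
  finally show "(kron A B * kron C D) $$ (i, j) = kron (A * C) (B * D) $$ (i, j)" .
qed (use A B C D in auto)

lemma adj_kron: "adj (kron A B) = kron (adj A) (adj B)"
proof (rule eq_matI)
  fix i j assume "i < dim_row (kron (adj A) (adj B))" "j < dim_col (kron (adj A) (adj B))"
  then have i: "i < dim_col A * dim_col B" and j: "j < dim_row A * dim_row B" by auto
  show "adj (kron A B) $$ (i, j) = kron (adj A) (adj B) $$ (i, j)"
    using i j div_mod_less_mult[OF i] div_mod_less_mult[OF j] by (simp add: kron_index)
qed auto

lemma kron_one: "kron (1\<^sub>m n) (1\<^sub>m m) = 1\<^sub>m (n * m)"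
proof (rule eq_matI)
  fix i j assume "i < dim_row (1\<^sub>m (n * m))" "j < dim_col (1\<^sub>m (n * m))"
  then have i: "i < n * m" and j: "j < n * m" by auto
  have "i = j \<longleftrightarrow> i div m = j div m \<and> i mod m = j mod m"
    by (metis div_mult_mod_eq)
  then show "kron (1\<^sub>m n) (1\<^sub>m m) $$ (i, j) = 1\<^sub>m (n * m) $$ (i, j)"
    using i j div_mod_less_mult[OF i] div_mod_less_mult[OF j] by (simp add: kron_index)
qed auto

lemma smult_smult_mat: "a \<cdot>\<^sub>m (b \<cdot>\<^sub>m A) = (a * b :: 'a :: semigroup_mult) \<cdot>\<^sub>m A"
  by (rule eq_matI) (auto simp: mult.assoc)

lemma tr_one [simp]: "tr (1\<^sub>m n) = of_nat n"
  by (simp add: tr_def)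

lemma tr_minus: "A \<in> carrier_mat n n \<Longrightarrow> B \<in> carrier_mat n n \<Longrightarrow> tr (A - B) = tr A - tr B"
  by (simp add: tr_def sum_subtractf)

lemma tr_smult: "A \<in> carrier_mat n n \<Longrightarrow> tr (c \<cdot>\<^sub>m A) = c * tr A"
  by (simp add: tr_def sum_distrib_left)

lemma tr_mult_comm:
  assumes A: "A \<in> carrier_mat n m" and B: "B \<in> carrier_mat m n"
  shows "tr (A * B) = tr (B * A)"
proof -
  have "tr (A * B) = (\<Sum>i<n. \<Sum>k<m. A $$ (i, k) * B $$ (k, i))"
    using A B by (simp add: tr_def scalar_prod_def lessThan_atLeast0)
  also have "\<dots> = (\<Sum>k<m. \<Sum>i<n. B $$ (k, i) * A $$ (i, k))"
    by (subst sum.swap) (simp add: mult.commute)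
  also have "\<dots> = tr (B * A)"
    using A B by (simp add: tr_def scalar_prod_def lessThan_atLeast0)
  finally show ?thesis .
qed

lemma tr_kron:
  assumes A: "A \<in> carrier_mat n n" and B: "B \<in> carrier_mat m m"
  shows "tr (kron A B) = tr A * tr B"
proof -
  have "tr (kron A B) = (\<Sum>x<n. \<Sum>y<m. kron A B $$ (x * m + y, x * m + y))"
    using A B by (simp add: tr_def sum_lessThan_mult)
  also have "\<dots> = (\<Sum>x<n. \<Sum>y<m. A $$ (x, x) * B $$ (y, y))"
    using A B by (intro sum.cong refl) (simp add: kron_index mult_add_less_mult)
  also have "\<dots> = tr A * tr B"
    using A B by (simp add: tr_def sum_product)
  finally show ?thesis .
qed

lemma unitary_kron_one:
  assumes "unitary n U" shows "unitary (n * m) (kron U (1\<^sub>m m))"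
proof -
  have U: "U \<in> carrier_mat n n" and UU: "U * adj U = 1\<^sub>m n" "adj U * U = 1\<^sub>m n"
    using assms by (auto simp: unitary_def)
  have "kron U (1\<^sub>m m) * adj (kron U (1\<^sub>m m)) = kron (U * adj U) (1\<^sub>m m * 1\<^sub>m m)"
    unfolding adj_kron adj_one by (rule kron_mult[OF U one_carrier_mat adj_carrier[OF U] one_carrier_mat])
  moreover have "adj (kron U (1\<^sub>m m)) * kron U (1\<^sub>m m) = kron (adj U * U) (1\<^sub>m m * 1\<^sub>m m)"
    unfolding adj_kron adj_one by (rule kron_mult[OF adj_carrier[OF U] one_carrier_mat U one_carrier_mat])
  ultimately show ?thesis
    using U unfolding unitary_def UU by (simp add: kron_one)
qed

lemma unitary_congruence_inverse:
  assumes "unitary n W" and M: "M \<in> carrier_mat n n"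
  shows "W * (adj W * M * W) * adj W = M"
proof -
  have W: "W \<in> carrier_mat n n" and aW: "adj W \<in> carrier_mat n n" and WW: "W * adj W = 1\<^sub>m n"
    using assms by (auto simp: unitary_def)
  have "W * (adj W * M * W) = (W * adj W) * (M * W)"
    using assoc_mult_mat[OF aW M W] assoc_mult_mat[OF W aW mult_carrier_mat[OF M W]] by simp
  also have "\<dots> = M * W"
    using M W by (simp add: WW)
  finally have "W * (adj W * M * W) * adj W = M * (W * adj W)"
    using assoc_mult_mat[OF M W aW] by simp
  then show ?thesis
    using M by (simp add: WW)
qed

lemma smult_one_minus_unitary_congruence:
  assumes "unitary n W" and M: "M \<in> carrier_mat n n"
  shows "c \<cdot>\<^sub>m 1\<^sub>m n - adj W * M * W = adj W * (c \<cdot>\<^sub>m 1\<^sub>m n - M) * W"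
proof -
  have W: "W \<in> carrier_mat n n" and aW: "adj W \<in> carrier_mat n n" and WW: "adj W * W = 1\<^sub>m n"
    using assms by (auto simp: unitary_def)
  have I: "c \<cdot>\<^sub>m 1\<^sub>m n \<in> carrier_mat n n" by simp
  have "adj W * (c \<cdot>\<^sub>m 1\<^sub>m n - M) = c \<cdot>\<^sub>m adj W - adj W * M"
    using mult_minus_distrib_mat[OF aW I M] mult_smult_distrib[OF aW one_carrier_mat] right_mult_one_mat[OF aW]
    by simp
  then have "adj W * (c \<cdot>\<^sub>m 1\<^sub>m n - M) * W = (c \<cdot>\<^sub>m adj W) * W - adj W * M * W"
    using minus_mult_distrib_mat[OF smult_carrier_mat[OF aW] mult_carrier_mat[OF aW M] W] by simp
  also have "(c \<cdot>\<^sub>m adj W) * W = c \<cdot>\<^sub>m 1\<^sub>m n"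
    using mult_smult_assoc_mat[OF aW W] by (simp add: WW)
  finally show ?thesis ..
qed

section \<open>Positive semidefinite matrices\<close>

definition qform :: "nat \<Rightarrow> complex mat \<Rightarrow> complex vec \<Rightarrow> complex" where
  "qform d M v = (\<Sum>i<d. \<Sum>j<d. cnj (v $ i) * M $$ (i, j) * v $ j)"

lemma psd_iff_qform:
  "psd d M \<longleftrightarrow> M \<in> carrier_mat d d \<and> (\<forall>v \<in> carrier_vec d. Im (qform d M v) = 0 \<and> Re (qform d M v) \<ge> 0)"
  by (simp add: psd_def qform_def Let_def)

lemma mult_mat_vec_index:
  "M \<in> carrier_mat m n \<Longrightarrow> v \<in> carrier_vec n \<Longrightarrow> i < m \<Longrightarrow> (M *\<^sub>v v) $ i = (\<Sum>j<n. M $$ (i, j) * v $ j)"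
  by (auto simp: scalar_prod_def lessThan_atLeast0 intro!: sum.cong)

lemma qform_mult_vec:
  assumes M: "M \<in> carrier_mat d d" and v: "v \<in> carrier_vec d"
  shows "qform d M v = (\<Sum>i<d. cnj (v $ i) * (M *\<^sub>v v) $ i)"
  unfolding qform_def
  by (intro sum.cong refl) (simp add: mult_mat_vec_index[OF M v] sum_distrib_left mult.assoc)

lemma sum_cnj_adj_mult_vec:
  assumes W: "W \<in> carrier_mat m n" and u: "u \<in> carrier_vec m" and v: "v \<in> carrier_vec n"
  shows "(\<Sum>i<n. cnj (v $ i) * (adj W *\<^sub>v u) $ i) = (\<Sum>l<m. cnj ((W *\<^sub>v v) $ l) * u $ l)"
proof -
  have "(\<Sum>i<n. cnj (v $ i) * (adj W *\<^sub>v u) $ i) = (\<Sum>i<n. \<Sum>l<m. cnj (v $ i) * cnj (W $$ (l, i)) * u $ l)"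
  proof (intro sum.cong refl)
    fix i assume "i \<in> {..<n}"
    then have "(adj W *\<^sub>v u) $ i = (\<Sum>l<m. adj W $$ (i, l) * u $ l)"
      using W u by (intro mult_mat_vec_index[of _ n m]) auto
    also have "\<dots> = (\<Sum>l<m. cnj (W $$ (l, i)) * u $ l)"
      using W \<open>i \<in> {..<n}\<close> by (intro sum.cong refl) auto
    finally show "cnj (v $ i) * (adj W *\<^sub>v u) $ i = (\<Sum>l<m. cnj (v $ i) * cnj (W $$ (l, i)) * u $ l)"
      by (simp add: sum_distrib_left mult.assoc)
  qed
  also have "\<dots> = (\<Sum>l<m. \<Sum>i<n. cnj (v $ i) * cnj (W $$ (l, i)) * u $ l)"
    by (rule sum.swap)
  also have "\<dots> = (\<Sum>l<m. cnj ((W *\<^sub>v v) $ l) * u $ l)"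
  proof (intro sum.cong refl)
    fix l assume "l \<in> {..<m}"
    then have "(W *\<^sub>v v) $ l = (\<Sum>i<n. W $$ (l, i) * v $ i)"
      by (intro mult_mat_vec_index[OF W v]) auto
    then show "(\<Sum>i<n. cnj (v $ i) * cnj (W $$ (l, i)) * u $ l) = cnj ((W *\<^sub>v v) $ l) * u $ l"
      by (simp add: sum_distrib_left sum_distrib_right mult_ac)
  qed
  finally show ?thesis .
qed

lemma qform_congruence:
  assumes M: "M \<in> carrier_mat d d" and W: "W \<in> carrier_mat d d" and v: "v \<in> carrier_vec d"
  shows "qform d (adj W * M * W) v = qform d M (W *\<^sub>v v)"
proof -
  have Wv: "W *\<^sub>v v \<in> carrier_vec d" and MWv: "M *\<^sub>v (W *\<^sub>v v) \<in> carrier_vec d"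
    using M W v by simp_all
  have "(adj W * M * W) *\<^sub>v v = (adj W * M) *\<^sub>v (W *\<^sub>v v)"
    using M W v by (intro assoc_mult_mat_vec[of _ d d _ d]) auto
  also have "\<dots> = adj W *\<^sub>v (M *\<^sub>v (W *\<^sub>v v))"
    using M W Wv by (intro assoc_mult_mat_vec[of _ d d _ d]) auto
  moreover have "qform d (adj W * M * W) v = (\<Sum>i<d. cnj (v $ i) * ((adj W * M * W) *\<^sub>v v) $ i)"
    using M W v by (intro qform_mult_vec) auto
  ultimately have "qform d (adj W * M * W) v = (\<Sum>i<d. cnj (v $ i) * (adj W *\<^sub>v (M *\<^sub>v (W *\<^sub>v v))) $ i)"
    by (simp only:)
  also have "\<dots> = qform d M (W *\<^sub>v v)"
    using sum_cnj_adj_mult_vec[OF W MWv v] qform_mult_vec[OF M Wv] by simp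
  finally show ?thesis .
qed

lemma qform_adj_mult_self:
  assumes X: "X \<in> carrier_mat m d" and v: "v \<in> carrier_vec d"
  shows "qform d (adj X * X) v = of_real (\<Sum>l<m. (cmod ((X *\<^sub>v v) $ l))\<^sup>2)"
proof -
  have Xv: "X *\<^sub>v v \<in> carrier_vec m" using X v by simp
  have "(adj X * X) *\<^sub>v v = adj X *\<^sub>v (X *\<^sub>v v)"
    using X v by (intro assoc_mult_mat_vec[of _ d m _ d]) auto
  moreover have "qform d (adj X * X) v = (\<Sum>i<d. cnj (v $ i) * ((adj X * X) *\<^sub>v v) $ i)"
    using X v by (intro qform_mult_vec) auto
  ultimately have "qform d (adj X * X) v = (\<Sum>i<d. cnj (v $ i) * (adj X *\<^sub>v (X *\<^sub>v v)) $ i)"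
    by (simp only:)
  also have "\<dots> = (\<Sum>l<m. cnj ((X *\<^sub>v v) $ l) * (X *\<^sub>v v) $ l)"
    by (rule sum_cnj_adj_mult_vec[OF X Xv v])
  also have "\<dots> = of_real (\<Sum>l<m. (cmod ((X *\<^sub>v v) $ l))\<^sup>2)"
    unfolding of_real_sum complex_norm_square by (simp add: mult.commute)
  finally show ?thesis .
qed

lemma psd_adj_mult_self: "X \<in> carrier_mat m d \<Longrightarrow> psd d (adj X * X)"
  by (auto simp: psd_iff_qform qform_adj_mult_self sum_nonneg intro: mult_carrier_mat)

lemma psd_congruence:
  assumes "psd d M" and W: "W \<in> carrier_mat d d"
  shows "psd d (adj W * M * W)"
  using assms W by (auto simp: psd_iff_qform qform_congruence)

lemma psd_smult:
  assumes "psd d M" "c \<ge> 0" shows "psd d (of_real c \<cdot>\<^sub>m M)"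
proof -
  have "qform d (of_real c \<cdot>\<^sub>m M) v = of_real c * qform d M v" if "M \<in> carrier_mat d d" for v
    using that by (simp add: qform_def sum_distrib_left mult_ac)
  then show ?thesis
    using assms by (auto simp: psd_iff_qform)
qed

lemma psd_tr_nonneg:
  assumes "psd d M" shows "Re (tr M) \<ge> 0"
proof -
  have M: "M \<in> carrier_mat d d" using assms by (simp add: psd_iff_qform)
  have "qform d M (unit_vec d i) = M $$ (i, i)" if "i < d" for i
  proof -
    have "qform d M (unit_vec d i) = (\<Sum>k<d. if k = i then M $$ (i, i) else 0)"
      unfolding qform_def using that
      by (intro sum.cong refl) (auto simp: unit_vec_def if_distrib sum.delta' cong: if_cong)
    then show ?thesis using that by simp
  qed
  then have "Re (M $$ (i, i)) \<ge> 0" if "i < d" for i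
    using assms that unit_vec_carrier[of d i] unfolding psd_iff_qform by metis
  then show ?thesis
    using M by (auto simp: tr_def Re_sum intro!: sum_nonneg)
qed

lemma density_unitary_congruence:
  assumes "density n M" "unitary n W" shows "density n (adj W * M * W)"
proof -
  have M: "M \<in> carrier_mat n n" and W: "W \<in> carrier_mat n n" "W * adj W = 1\<^sub>m n"
    using assms by (auto simp: density_def psd_def unitary_def)
  have "tr (adj W * M * W) = tr (adj W * (M * W))"
    using M W by (simp add: assoc_mult_mat[of _ n n])
  also have "\<dots> = tr (M * W * adj W)"
    using M W by (simp add: tr_mult_comm[of _ n n])
  also have "M * W * adj W = M"
    using M W assoc_mult_mat[OF M W(1) adj_carrier[OF W(1)]] by simp
  also have "tr M = 1"
    using assms(1) by (simp add: density_def)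
  finally show ?thesis
    using assms W by (simp add: density_def psd_congruence)
qed

lemma density_maximally_mixed: "n > 0 \<Longrightarrow> density n ((1 / of_nat n) \<cdot>\<^sub>m 1\<^sub>m n)"
  using psd_smult[OF psd_adj_mult_self[OF one_carrier_mat[of n]], of "1 / n"]
  by (simp add: density_def tr_smult[of _ n])

section \<open>Trace norm and conditional min-entropy\<close>

lemma char_poly_root_adj_mult_self_nonneg:
  assumes X: "X \<in> carrier_mat m n" and root: "poly (char_poly (adj X * X)) z = 0"
  shows "Re z \<ge> 0"
proof -
  have XX: "adj X * X \<in> carrier_mat n n" using X by auto
  obtain v where "eigenvector (adj X * X) v z"
    using eigenvalue_root_char_poly[OF XX] root unfolding eigenvalue_def by blast
  then have v: "v \<in> carrier_vec n" and "v \<noteq> 0\<^sub>v n" and ev: "(adj X * X) *\<^sub>v v = z \<cdot>\<^sub>v v"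
    using XX unfolding eigenvector_def by auto
  then obtain k where "k < n" "v $ k \<noteq> 0"
    by (metis carrier_vecD eq_vecI index_zero_vec)
  then have pos: "(\<Sum>i<n. (cmod (v $ i))\<^sup>2) > 0"
    by (intro sum_pos2[of _ k]) auto
  have "qform n (adj X * X) v = (\<Sum>i<n. cnj (v $ i) * ((adj X * X) *\<^sub>v v) $ i)"
    using XX v by (rule qform_mult_vec)
  also have "\<dots> = z * of_real (\<Sum>i<n. (cmod (v $ i))\<^sup>2)"
    using v unfolding ev of_real_sum complex_norm_square
    by (simp add: sum_distrib_left mult_ac)
  finally have "z * of_real (\<Sum>i<n. (cmod (v $ i))\<^sup>2) = of_real (\<Sum>l<m. (cmod ((X *\<^sub>v v) $ l))\<^sup>2)"
    using qform_adj_mult_self[OF X v] by simp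
  then have "Re (z * of_real (\<Sum>i<n. (cmod (v $ i))\<^sup>2)) = (\<Sum>l<m. (cmod ((X *\<^sub>v v) $ l))\<^sup>2)"
    by (metis Re_complex_of_real)
  then have "Re z * (\<Sum>i<n. (cmod (v $ i))\<^sup>2) = (\<Sum>l<m. (cmod ((X *\<^sub>v v) $ l))\<^sup>2)"
    by simp
  moreover have "(\<Sum>l<m. (cmod ((X *\<^sub>v v) $ l))\<^sup>2) \<ge> 0" by (simp add: sum_nonneg)
  ultimately show ?thesis using pos by (metis zero_le_mult_iff not_less)
qed

lemma trace_norm_nonneg: "trace_norm X \<ge> 0"
  unfolding trace_norm_def Let_def
  using char_poly_root_adj_mult_self_nonneg[of X "dim_row X" "dim_col X"] by (auto intro!: sum_nonneg)

lemma trace_norm_if_adj_mult_self_scalar: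
  assumes X: "X \<in> carrier_mat m n" and "n > 0" and "c \<ge> 0"
    and XX: "adj X * X = of_real c \<cdot>\<^sub>m 1\<^sub>m n"
  shows "trace_norm X = n * sqrt c"
proof -
  have "char_poly (of_real c \<cdot>\<^sub>m 1\<^sub>m n) = (\<Prod>a\<leftarrow>diag_mat (of_real c \<cdot>\<^sub>m 1\<^sub>m n). [:- a, 1:])"
    by (rule char_poly_upper_triangular) (auto simp: upper_triangular_def)
  also have "diag_mat (of_real c \<cdot>\<^sub>m 1\<^sub>m n) = replicate n (of_real c)"
    by (rule nth_equalityI) (auto simp: diag_mat_def)
  finally have "char_poly (adj X * X) = [:- of_real c, 1:] ^ n"
    unfolding XX by (simp add: prod_list_replicate)
  moreover have "{z. poly ([:- of_real c, 1:] ^ n) z = 0} = {of_real c :: complex}"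
    using \<open>n > 0\<close> by auto
  ultimately show ?thesis
    using \<open>c \<ge> 0\<close> by (simp add: trace_norm_def order_power_n_n)
qed

lemma hmin_feasible_le_log:
  assumes "dA > 0" and \<rho>: "\<rho> \<in> carrier_mat (dA * dE) (dA * dE)" "tr \<rho> = 1" and "density dE \<sigma>"
    and feasible: "psd (dA * dE) (of_real (2 powr - lam) \<cdot>\<^sub>m kron (1\<^sub>m dA) \<sigma> - \<rho>)"
  shows "lam \<le> log 2 dA"
proof -
  have \<sigma>: "\<sigma> \<in> carrier_mat dE dE" and "tr \<sigma> = 1"
    using \<open>density dE \<sigma>\<close> by (auto simp: density_def psd_def)
  have "tr (of_real (2 powr - lam) \<cdot>\<^sub>m kron (1\<^sub>m dA) \<sigma> - \<rho>) = of_real (2 powr - lam * dA) - 1"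
    using \<sigma> \<rho> \<open>tr \<sigma> = 1\<close>
    by (simp add: tr_minus[of _ "dA * dE"] tr_smult[of _ "dA * dE"] tr_kron[OF one_carrier_mat \<sigma>] tr_one)
  then have "2 powr - lam * dA \<ge> 1"
    using psd_tr_nonneg[OF feasible] by simp
  moreover have "2 powr - lam * dA = 2 powr (log 2 dA - lam)"
    using \<open>dA > 0\<close> by (simp add: powr_diff powr_minus_divide)
  ultimately have "2 powr 0 \<le> 2 powr (log 2 dA - lam)"
    by simp
  then show ?thesis
    by (simp only: powr_le_cancel_iff)
qed

lemma hmin_lower_bound:
  assumes "dA > 0" and \<rho>: "\<rho> \<in> carrier_mat (dA * dE) (dA * dE)" "tr \<rho> = 1" and "density dE \<sigma>"
    and "psd (dA * dE) (of_real (2 powr - lam) \<cdot>\<^sub>m kron (1\<^sub>m dA) \<sigma> - \<rho>)"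
  shows "lam \<le> hmin dA dE \<rho>"
  unfolding hmin_def
proof (rule cSup_upper)
  \<comment> \<open>Without this bound the real Sup in hmin would be a junk value.\<close>
  show "bdd_above {lam. \<exists>\<sigma>. density dE \<sigma> \<and>
      psd (dA * dE) (of_real (2 powr - lam) \<cdot>\<^sub>m kron (1\<^sub>m dA) \<sigma> - \<rho>)}"
    using hmin_feasible_le_log[OF \<open>dA > 0\<close> \<rho>] by (intro bdd_aboveI[where M = "log 2 dA"]) blast
qed (use assms in auto)

section \<open>Block-diagonal matrices\<close>

text \<open>The matrix sum_a |a><a| (x) B a, with B a an m x m block, in the index encoding of the
  tensor product used for kron.\<close>

definition blockdiag :: "nat \<Rightarrow> nat \<Rightarrow> (nat \<Rightarrow> nat \<Rightarrow> nat \<Rightarrow> complex) \<Rightarrow> complex mat" where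
  "blockdiag N m B = mat (N * m) (N * m)
     (\<lambda>(i, j). if i div m = j div m then B (i div m) (i mod m) (j mod m) else 0)"

lemma blockdiag_carrier [simp]: "blockdiag N m B \<in> carrier_mat (N * m) (N * m)"
  and blockdiag_dims [simp]: "dim_row (blockdiag N m B) = N * m" "dim_col (blockdiag N m B) = N * m"
  by (simp_all add: blockdiag_def)

lemma blockdiag_index:
  "i < N * m \<Longrightarrow> j < N * m \<Longrightarrow>
   blockdiag N m B $$ (i, j) = (if i div m = j div m then B (i div m) (i mod m) (j mod m) else 0)"
  by (simp add: blockdiag_def)

lemma blockdiag_index_block:
  "a < N \<Longrightarrow> b < N \<Longrightarrow> r < m \<Longrightarrow> s < m \<Longrightarrow>
   blockdiag N m B $$ (a * m + r, b * m + s) = (if a = b then B a r s else 0)"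
  by (simp add: blockdiag_index mult_add_less_mult)

lemma blockdiag_cong:
  "(\<And>a r s. a < N \<Longrightarrow> r < m \<Longrightarrow> s < m \<Longrightarrow> B a r s = C a r s) \<Longrightarrow> blockdiag N m B = blockdiag N m C"
  by (rule eq_matI) (auto simp: blockdiag_index div_mod_less_mult)

lemma blockdiag_minus: "blockdiag N m B - blockdiag N m C = blockdiag N m (\<lambda>a r s. B a r s - C a r s)"
  by (rule eq_matI) (auto simp: blockdiag_index)

lemma smult_blockdiag: "c \<cdot>\<^sub>m blockdiag N m B = blockdiag N m (\<lambda>a r s. c * B a r s)"
  by (rule eq_matI) (auto simp: blockdiag_index)

lemma smult_one_eq_blockdiag: "c \<cdot>\<^sub>m 1\<^sub>m (N * m) = blockdiag N m (\<lambda>a r s. if r = s then c else 0)"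
proof (rule eq_matI)
  fix i j assume "i < dim_row (blockdiag N m (\<lambda>a r s. if r = s then c else 0))"
    "j < dim_col (blockdiag N m (\<lambda>a r s. if r = s then c else 0))"
  moreover have "i = j \<longleftrightarrow> i div m = j div m \<and> i mod m = j mod m"
    by (metis div_mult_mod_eq)
  ultimately show "(c \<cdot>\<^sub>m 1\<^sub>m (N * m)) $$ (i, j) = blockdiag N m (\<lambda>a r s. if r = s then c else 0) $$ (i, j)"
    by (auto simp: blockdiag_index)
qed auto

lemma kron_smult_one_left:
  assumes "M \<in> carrier_mat m m"
  shows "kron (c \<cdot>\<^sub>m 1\<^sub>m N) M = blockdiag N m (\<lambda>a r s. c * M $$ (r, s))"
proof (rule eq_matI)
  fix i j assume "i < dim_row (blockdiag N m (\<lambda>a r s. c * M $$ (r, s)))"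
    "j < dim_col (blockdiag N m (\<lambda>a r s. c * M $$ (r, s)))"
  then have i: "i < N * m" and j: "j < N * m" by auto
  show "kron (c \<cdot>\<^sub>m 1\<^sub>m N) M $$ (i, j) = blockdiag N m (\<lambda>a r s. c * M $$ (r, s)) $$ (i, j)"
    using assms i j div_mod_less_mult[OF i] div_mod_less_mult[OF j] by (simp add: kron_index blockdiag_index)
qed (use assms in auto)

lemma kron_one_smult_one: "kron (1\<^sub>m N) (c \<cdot>\<^sub>m 1\<^sub>m m) = c \<cdot>\<^sub>m 1\<^sub>m (N * m)"
proof -
  have one: "1 \<cdot>\<^sub>m 1\<^sub>m N = (1\<^sub>m N :: complex mat)" by (rule eq_matI) auto
  have "kron (1 \<cdot>\<^sub>m 1\<^sub>m N) (c \<cdot>\<^sub>m 1\<^sub>m m) = blockdiag N m (\<lambda>a r s. 1 * (c \<cdot>\<^sub>m 1\<^sub>m m) $$ (r, s))"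
    by (rule kron_smult_one_left) simp
  also have "\<dots> = c \<cdot>\<^sub>m 1\<^sub>m (N * m)"
    unfolding smult_one_eq_blockdiag by (rule blockdiag_cong) simp
  finally show ?thesis unfolding one .
qed

lemma tr_blockdiag: "tr (blockdiag N m B) = (\<Sum>a<N. \<Sum>r<m. B a r r)"
  by (simp add: tr_def sum_lessThan_mult blockdiag_index_block)

lemma adj_mult_blockdiag:
  "adj (blockdiag N m B) * blockdiag N m B = blockdiag N m (\<lambda>a r s. \<Sum>y<m. cnj (B a y r) * B a y s)"
proof (rule eq_matI)
  fix i j assume "i < dim_row (blockdiag N m (\<lambda>a r s. \<Sum>y<m. cnj (B a y r) * B a y s))"
    "j < dim_col (blockdiag N m (\<lambda>a r s. \<Sum>y<m. cnj (B a y r) * B a y s))"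
  then have i: "i < N * m" and j: "j < N * m" by auto
  have "(adj (blockdiag N m B) * blockdiag N m B) $$ (i, j)
      = (\<Sum>k<N * m. cnj (blockdiag N m B $$ (k, i)) * blockdiag N m B $$ (k, j))"
    using i j by (auto simp: scalar_prod_def lessThan_atLeast0 intro!: sum.cong)
  also have "\<dots> = (\<Sum>x<N. \<Sum>y<m. cnj (blockdiag N m B $$ (x * m + y, i)) * blockdiag N m B $$ (x * m + y, j))"
    by (rule sum_lessThan_mult)
  also have "\<dots> = (\<Sum>x<N. if x = i div m \<and> x = j div m
      then (\<Sum>y<m. cnj (B x y (i mod m)) * B x y (j mod m)) else 0)"
  proof (intro sum.cong refl)
    fix x assume "x \<in> {..<N}"
    then have col: "blockdiag N m B $$ (x * m + y, k) = (if x = k div m then B x y (k mod m) else 0)"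
      if "y < m" "k < N * m" for y k
      using that by (simp add: blockdiag_index mult_add_less_mult)
    have "(\<Sum>y<m. cnj (blockdiag N m B $$ (x * m + y, i)) * blockdiag N m B $$ (x * m + y, j))
      = (\<Sum>y<m. cnj (if x = i div m then B x y (i mod m) else 0) * (if x = j div m then B x y (j mod m) else 0))"
      using i j by (intro sum.cong refl) (simp add: col)
    then show "(\<Sum>y<m. cnj (blockdiag N m B $$ (x * m + y, i)) * blockdiag N m B $$ (x * m + y, j))
      = (if x = i div m \<and> x = j div m then \<Sum>y<m. cnj (B x y (i mod m)) * B x y (j mod m) else 0)"
      by (cases "x = i div m") auto
  qed
  also have "\<dots> = (if i div m = j div m then \<Sum>y<m. cnj (B (i div m) y (i mod m)) * B (i div m) y (j mod m) else 0)"
    using div_mod_less_mult[OF i] by (cases "i div m = j div m") (auto intro: sum.neutral)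
  also have "\<dots> = blockdiag N m (\<lambda>a r s. \<Sum>y<m. cnj (B a y r) * B a y s) $$ (i, j)"
    using i j by (simp add: blockdiag_index)
  finally show "(adj (blockdiag N m B) * blockdiag N m B) $$ (i, j)
      = blockdiag N m (\<lambda>a r s. \<Sum>y<m. cnj (B a y r) * B a y s) $$ (i, j)" .
qed auto

lemma psd_blockdiag_outer:
  assumes "m > 0"
  shows "psd (N * m) (blockdiag N m (\<lambda>a r s. f a r * cnj (f a s)))"
proof -
  define X where "X = blockdiag N m (\<lambda>a y s. if y = 0 then cnj (f a s) else 0)"
  have outer: "(\<Sum>y<m. cnj (if y = 0 then cnj (f a r) else 0) * (if y = 0 then cnj (f a s) else 0))
      = f a r * cnj (f a s)" for a r s
  proof -
    have "(\<Sum>y<m. cnj (if y = 0 then cnj (f a r) else 0) * (if y = 0 then cnj (f a s) else 0))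
        = (\<Sum>y<m. if y = 0 then f a r * cnj (f a s) else 0)"
      by (rule sum.cong[OF refl]) simp
    then show ?thesis using assms by simp
  qed
  have "blockdiag N m (\<lambda>a r s. f a r * cnj (f a s)) = adj X * X"
    unfolding X_def adj_mult_blockdiag outer ..
  moreover have "psd (N * m) (adj X * X)"
    unfolding X_def by (rule psd_adj_mult_self[OF blockdiag_carrier])
  ultimately show ?thesis
    by (simp only:)
qed

section \<open>Partial trace and the measurement map\<close>

lemma ptrace_A_blockdiag: "ptrace_A N m (blockdiag N m B) = mat m m (\<lambda>(r, s). \<Sum>a<N. B a r s)"
proof (rule eq_matI)
  fix r s assume "r < dim_row (mat m m (\<lambda>(r, s). \<Sum>a<N. B a r s))" "s < dim_col (mat m m (\<lambda>(r, s). \<Sum>a<N. B a r s))"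
  then have "r < m" "s < m" by auto
  then show "ptrace_A N m (blockdiag N m B) $$ (r, s) = mat m m (\<lambda>(r, s). \<Sum>a<N. B a r s) $$ (r, s)"
    by (simp add: ptrace_A_def) (intro sum.cong refl, simp add: blockdiag_index_block)
qed (simp_all add: ptrace_A_def)

lemma T_map_blockdiag:
  "T_map d1 d2 m (blockdiag (d1 * d2) m B) = blockdiag d1 m (\<lambda>a r s. \<Sum>y<d2. B (a * d2 + y) r s)"
proof (rule eq_matI)
  fix i j assume "i < dim_row (blockdiag d1 m (\<lambda>a r s. \<Sum>y<d2. B (a * d2 + y) r s))"
    "j < dim_col (blockdiag d1 m (\<lambda>a r s. \<Sum>y<d2. B (a * d2 + y) r s))"
  then have i: "i < d1 * m" and j: "j < d1 * m" by auto
  show "T_map d1 d2 m (blockdiag (d1 * d2) m B) $$ (i, j) = blockdiag d1 m (\<lambda>a r s. \<Sum>y<d2. B (a * d2 + y) r s) $$ (i, j)"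
    using i j div_mod_less_mult[OF i] div_mod_less_mult[OF j]
    by (auto simp: T_map_def blockdiag_index blockdiag_index_block mult_add_less_mult intro!: sum.cong)
qed (auto simp: T_map_def)

lemma kron_one_mult_index:
  assumes X: "X \<in> carrier_mat n n" and M: "M \<in> carrier_mat (n * m) k"
    and "a < n" "e < m" "j < k"
  shows "(kron X (1\<^sub>m m) * M) $$ (a * m + e, j) = (\<Sum>b<n. X $$ (a, b) * M $$ (b * m + e, j))"
proof -
  have "(kron X (1\<^sub>m m) * M) $$ (a * m + e, j) = (\<Sum>l<n * m. kron X (1\<^sub>m m) $$ (a * m + e, l) * M $$ (l, j))"
    using assms by (auto simp: scalar_prod_def lessThan_atLeast0 mult_add_less_mult intro!: sum.cong)
  also have "\<dots> = (\<Sum>b<n. \<Sum>s<m. if s = e then X $$ (a, b) * M $$ (b * m + s, j) else 0)"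
    unfolding sum_lessThan_mult using assms
    by (intro sum.cong refl) (simp add: kron_index mult_add_less_mult)
  also have "\<dots> = (\<Sum>b<n. X $$ (a, b) * M $$ (b * m + e, j))"
    using \<open>e < m\<close> by simp
  finally show ?thesis .
qed

lemma mult_kron_one_index:
  assumes X: "X \<in> carrier_mat n n" and M: "M \<in> carrier_mat k (n * m)"
    and "a < n" "e < m" "i < k"
  shows "(M * kron X (1\<^sub>m m)) $$ (i, a * m + e) = (\<Sum>b<n. M $$ (i, b * m + e) * X $$ (b, a))"
proof -
  have "(M * kron X (1\<^sub>m m)) $$ (i, a * m + e) = (\<Sum>l<n * m. M $$ (i, l) * kron X (1\<^sub>m m) $$ (l, a * m + e))"
    using assms by (auto simp: scalar_prod_def lessThan_atLeast0 mult_add_less_mult intro!: sum.cong)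
  also have "\<dots> = (\<Sum>b<n. \<Sum>s<m. if s = e then M $$ (i, b * m + s) * X $$ (b, a) else 0)"
    unfolding sum_lessThan_mult using assms
    by (intro sum.cong refl) (simp add: kron_index mult_add_less_mult)
  also have "\<dots> = (\<Sum>b<n. M $$ (i, b * m + e) * X $$ (b, a))"
    using \<open>e < m\<close> by simp
  finally show ?thesis .
qed

lemma ptrace_A_kron_one_mult_commute:
  assumes X: "X \<in> carrier_mat n n" and M: "M \<in> carrier_mat (n * m) (n * m)"
  shows "ptrace_A n m (kron X (1\<^sub>m m) * M) = ptrace_A n m (M * kron X (1\<^sub>m m))"
proof (rule eq_matI)
  fix e e' assume "e < dim_row (ptrace_A n m (M * kron X (1\<^sub>m m)))" "e' < dim_col (ptrace_A n m (M * kron X (1\<^sub>m m)))"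
  then have e: "e < m" "e' < m" by (simp_all add: ptrace_A_def)
  have "ptrace_A n m (kron X (1\<^sub>m m) * M) $$ (e, e') = (\<Sum>a<n. \<Sum>b<n. X $$ (a, b) * M $$ (b * m + e, a * m + e'))"
    using e X M by (simp add: ptrace_A_def kron_one_mult_index mult_add_less_mult del: index_mult_mat)
  also have "\<dots> = (\<Sum>b<n. \<Sum>a<n. M $$ (b * m + e, a * m + e') * X $$ (a, b))"
    by (subst sum.swap) (simp add: mult.commute)
  also have "\<dots> = ptrace_A n m (M * kron X (1\<^sub>m m)) $$ (e, e')"
    using e X M by (simp add: ptrace_A_def mult_kron_one_index mult_add_less_mult del: index_mult_mat)
  finally show "ptrace_A n m (kron X (1\<^sub>m m) * M) $$ (e, e') = ptrace_A n m (M * kron X (1\<^sub>m m)) $$ (e, e')" .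
qed (simp_all add: ptrace_A_def)

lemma ptrace_A_unitary_congruence:
  assumes U: "unitary n U" and M: "M \<in> carrier_mat (n * m) (n * m)"
  shows "ptrace_A n m (adj (kron U (1\<^sub>m m)) * M * kron U (1\<^sub>m m)) = ptrace_A n m M"
proof -
  define V where "V = kron U (1\<^sub>m m)"
  have V: "V \<in> carrier_mat (n * m) (n * m)" and VV: "V * adj V = 1\<^sub>m (n * m)"
    using unitary_kron_one[OF U] by (simp_all add: unitary_def V_def)
  have aU: "adj U \<in> carrier_mat n n" using U by (simp add: unitary_def)
  have aV: "adj V = kron (adj U) (1\<^sub>m m)" by (simp add: V_def adj_kron)
  have "ptrace_A n m (adj V * M * V) = ptrace_A n m (kron (adj U) (1\<^sub>m m) * (M * V))"
    using assoc_mult_mat[OF adj_carrier[OF V] M V] by (simp add: aV)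
  also have "\<dots> = ptrace_A n m ((M * V) * adj V)"
    using M V by (simp add: ptrace_A_kron_one_mult_commute[OF aU] aV)
  also have "(M * V) * adj V = M"
    using M V VV by (simp add: assoc_mult_mat[OF M V adj_carrier[OF V]])
  finally show ?thesis unfolding V_def .
qed

section \<open>A state correlating the first subsystem with a qubit\<close>

definition phase :: "nat \<Rightarrow> nat \<Rightarrow> nat \<Rightarrow> complex" where
  "phase d j r = cis (2 * pi * real j * real r / real d)"

lemma cnj_phase_mult [simp]: "cnj (phase d j r) * phase d j r = 1"
  and phase_mult_cnj [simp]: "phase d j r * cnj (phase d j r) = 1"
  by (simp_all add: phase_def cis_cnj cis_mult)

lemma sum_phase_orthogonal:
  assumes "r < d" "s < d"
  shows "(\<Sum>j<d. phase d j r * cnj (phase d j s)) = (if r = s then of_nat d else 0)"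
proof (cases "r = s")
  case True then show ?thesis
    by simp
next
  case False
  define \<omega> where "\<omega> = cis (2 * pi * (real r - real s) / real d)"
  have terms: "phase d j r * cnj (phase d j s) = \<omega> ^ j" for j
    by (simp add: phase_def \<omega>_def cis_cnj cis_mult DeMoivre algebra_simps diff_divide_distrib)
  have "\<omega> \<noteq> 1"
  proof
    assume "\<omega> = 1"
    then obtain k :: int where "2 * pi * (real r - real s) / real d = k * 2 * pi"
      by (auto simp: \<omega>_def complex_eq_iff cos_one_2pi_int)
    moreover have "real d > 0" using assms by simp
    ultimately have "(real r - real s) * (2 * pi) = k * real d * (2 * pi)"
      by (simp add: field_simps)
    then have "real r - real s = k * real d"
      by simp
    then have eq: "int r - int s = k * int d"
      by (metis of_int_eq_iff of_int_diff of_int_mult of_int_of_nat_eq)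
    then have "k \<noteq> 0" using False by auto
    then have "int d \<le> \<bar>k\<bar> * int d"
      by (simp add: mult_le_cancel_right1 abs_if linorder_not_le)
    also have "\<dots> = \<bar>int r - int s\<bar>" by (simp add: eq abs_mult)
    finally show False using assms by linarith
  qed
  have "\<omega> ^ d = cis (2 * pi * (real r - real s))"
    using assms by (simp add: \<omega>_def DeMoivre)
  also have "\<dots> = 1"
    using cis_multiple_2pi[of "real r - real s"] by (simp add: Ints_diff)
  finally have "\<omega> ^ d = 1" .
  then show ?thesis
    using False \<open>\<omega> \<noteq> 1\<close> by (simp add: terms geometric_sum)
qed

text \<open>The state |A|^-1 sum_a |a><a| (x) |phi_a1><phi_a1| of the header, with a1 = a div d2.\<close>

definition correlated_state :: "nat \<Rightarrow> nat \<Rightarrow> complex mat" where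
  "correlated_state d1 d2 = blockdiag (d1 * d2) 2
     (\<lambda>a r s. phase d1 (a div d2) r * cnj (phase d1 (a div d2) s) / of_nat (2 * (d1 * d2)))"

lemma correlated_state_carrier [simp]:
  "correlated_state d1 d2 \<in> carrier_mat (d1 * d2 * 2) (d1 * d2 * 2)"
  by (simp add: correlated_state_def)

lemma psd_correlated_state: "psd (d1 * d2 * 2) (correlated_state d1 d2)"
proof -
  have "correlated_state d1 d2 = of_real (1 / (2 * (d1 * d2))) \<cdot>\<^sub>m
      blockdiag (d1 * d2) 2 (\<lambda>a r s. phase d1 (a div d2) r * cnj (phase d1 (a div d2) s))"
    unfolding correlated_state_def smult_blockdiag by (rule blockdiag_cong) simp
  moreover have "psd (d1 * d2 * 2) (of_real (1 / (2 * (d1 * d2))) \<cdot>\<^sub>m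
      blockdiag (d1 * d2) 2 (\<lambda>a r s. phase d1 (a div d2) r * cnj (phase d1 (a div d2) s)))"
    by (intro psd_smult psd_blockdiag_outer) auto
  ultimately show ?thesis
    by (simp only:)
qed

lemma psd_scaled_one_minus_correlated_state:
  "psd (d1 * d2 * 2) ((1 / of_nat (d1 * d2)) \<cdot>\<^sub>m 1\<^sub>m (d1 * d2 * 2) - correlated_state d1 d2)"
proof -
  \<comment> \<open>On a qubit, 1 - |phi><phi| projects onto the orthogonal vector (|0> - w^j |1>) / sqrt 2.\<close>
  define \<psi> where "\<psi> a r = (- 1) ^ r * phase d1 (a div d2) r" for a r
  have "(1 / of_nat (d1 * d2)) \<cdot>\<^sub>m 1\<^sub>m (d1 * d2 * 2) - correlated_state d1 d2
      = of_real (1 / (2 * (d1 * d2))) \<cdot>\<^sub>m blockdiag (d1 * d2) 2 (\<lambda>a r s. \<psi> a r * cnj (\<psi> a s))"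
    unfolding correlated_state_def smult_one_eq_blockdiag blockdiag_minus smult_blockdiag
  proof (rule blockdiag_cong)
    fix a r s :: nat assume "r < 2" "s < 2"
    then consider "r = s" | "r = 0" "s = 1" | "r = 1" "s = 0" by linarith
    then show "(if r = s then 1 / of_nat (d1 * d2) else 0)
        - phase d1 (a div d2) r * cnj (phase d1 (a div d2) s) / of_nat (2 * (d1 * d2))
      = of_real (1 / (2 * (d1 * d2))) * (\<psi> a r * cnj (\<psi> a s))"
      by cases (simp_all add: \<psi>_def field_simps)
  qed
  moreover have "psd (d1 * d2 * 2) (of_real (1 / (2 * (d1 * d2))) \<cdot>\<^sub>m
      blockdiag (d1 * d2) 2 (\<lambda>a r s. \<psi> a r * cnj (\<psi> a s)))"
    by (intro psd_smult psd_blockdiag_outer) auto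
  ultimately show ?thesis
    by (simp only:)
qed

lemma tr_correlated_state:
  assumes "d1 > 0" "d2 > 0" shows "tr (correlated_state d1 d2) = 1"
  using assms by (simp add: correlated_state_def tr_blockdiag numeral_2_eq_2)

lemma ptrace_A_correlated_state:
  assumes "d1 \<ge> 2" "d2 > 0"
  shows "ptrace_A (d1 * d2) 2 (correlated_state d1 d2) = (1 / 2) \<cdot>\<^sub>m 1\<^sub>m 2"
proof (rule eq_matI)
  fix r s assume "r < dim_row ((1 / 2 :: complex) \<cdot>\<^sub>m 1\<^sub>m 2)" "s < dim_col ((1 / 2 :: complex) \<cdot>\<^sub>m 1\<^sub>m 2)"
  then have rs: "r < 2" "s < 2" by auto
  have "ptrace_A (d1 * d2) 2 (correlated_state d1 d2) $$ (r, s)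
      = (\<Sum>x<d1. \<Sum>y<d2. phase d1 x r * cnj (phase d1 x s) / of_nat (2 * (d1 * d2)))"
    using rs by (simp add: correlated_state_def ptrace_A_blockdiag sum_lessThan_mult)
  also have "\<dots> = of_nat d2 * (\<Sum>x<d1. phase d1 x r * cnj (phase d1 x s)) / of_nat (2 * (d1 * d2))"
    by (simp add: sum_divide_distrib)
  also have "\<dots> = ((1 / 2) \<cdot>\<^sub>m 1\<^sub>m 2 :: complex mat) $$ (r, s)"
    using assms rs by (simp add: sum_phase_orthogonal)
  finally show "ptrace_A (d1 * d2) 2 (correlated_state d1 d2) $$ (r, s) = ((1 / 2) \<cdot>\<^sub>m 1\<^sub>m 2 :: complex mat) $$ (r, s)" .
qed (simp_all add: ptrace_A_def)

lemma T_map_correlated_state: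
  assumes "d2 > 0"
  shows "T_map d1 d2 2 (correlated_state d1 d2)
    = blockdiag d1 2 (\<lambda>a r s. phase d1 a r * cnj (phase d1 a s) / of_nat (2 * d1))"
  unfolding correlated_state_def T_map_blockdiag
  using assms by (intro blockdiag_cong) simp

lemma trace_norm_correlated_state:
  assumes "d1 \<ge> 2" "d2 > 0"
  shows "trace_norm (T_map d1 d2 2 (correlated_state d1 d2)
      - kron ((1 / of_nat d1) \<cdot>\<^sub>m 1\<^sub>m d1) (ptrace_A (d1 * d2) 2 (correlated_state d1 d2))) = 1"
proof -
  \<comment> \<open>The deviation has the blocks (0, cnj w^a; w^a, 0) / (2 d1), so its Gram matrix is scalar.\<close>
  define c :: real where "c = 1 / (2 * d1)\<^sup>2"
  define Q where "Q a r s = (phase d1 a r * cnj (phase d1 a s) - (if r = s then 1 else 0)) / of_nat (2 * d1)"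
    for a r s
  have Q: "Q a 0 0 = 0" "Q a 1 1 = 0"
    "cnj (Q a 0 1) * Q a 0 1 = of_real c" "cnj (Q a 1 0) * Q a 1 0 = of_real c" for a
  proof -
    have "cnj (phase d1 a 1) * phase d1 a 1 = 1" by simp
    then show "cnj (Q a 0 1) * Q a 0 1 = of_real c" "cnj (Q a 1 0) * Q a 1 0 = of_real c"
      by (simp_all add: Q_def c_def power2_eq_square field_simps)
  qed (simp_all add: Q_def)
  have "T_map d1 d2 2 (correlated_state d1 d2)
      - kron ((1 / of_nat d1) \<cdot>\<^sub>m 1\<^sub>m d1) (ptrace_A (d1 * d2) 2 (correlated_state d1 d2)) = blockdiag d1 2 Q"
    unfolding T_map_correlated_state[OF \<open>d2 > 0\<close>] ptrace_A_correlated_state[OF assms]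
      kron_smult_one_left[OF smult_carrier_mat[OF one_carrier_mat]] blockdiag_minus
    by (rule blockdiag_cong) (simp add: Q_def diff_divide_distrib)
  moreover have "adj (blockdiag d1 2 Q) * blockdiag d1 2 Q = of_real c \<cdot>\<^sub>m 1\<^sub>m (d1 * 2)"
    unfolding adj_mult_blockdiag smult_one_eq_blockdiag
  proof (rule blockdiag_cong)
    fix a r s :: nat assume "r < 2" "s < 2"
    moreover have sum2: "(\<Sum>y<2. cnj (Q a y r) * Q a y s) = cnj (Q a 0 r) * Q a 0 s + cnj (Q a 1 r) * Q a 1 s"
      by (simp add: numeral_2_eq_2)
    ultimately consider "r = 0" "s = 0" | "r = 0" "s = 1" | "r = 1" "s = 0" | "r = 1" "s = 1" by linarith
    then show "(\<Sum>y<2. cnj (Q a y r) * Q a y s) = (if r = s then of_real c else 0)"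
      using sum2 by cases (simp_all add: Q[unfolded One_nat_def])
  qed
  moreover have "sqrt c = 1 / (2 * d1)"
    unfolding c_def by (rule real_sqrt_unique) (simp_all add: power_divide)
  then have "real (d1 * 2) * sqrt c = 1"
    using assms by simp
  moreover have "c \<ge> 0" by (simp add: c_def)
  ultimately show ?thesis
    using assms by (simp add: trace_norm_if_adj_mult_self_scalar[OF blockdiag_carrier])
qed

lemma correlated_state_witness:
  assumes "d1 \<ge> 2" "d2 > 0" "unitary (d1 * d2) U"
  defines "\<rho> \<equiv> adj (kron U (1\<^sub>m 2)) * correlated_state d1 d2 * kron U (1\<^sub>m 2)"
  shows "density (d1 * d2 * 2) \<rho>" and "log 2 (d1 * d2) - 1 \<le> hmin (d1 * d2) 2 \<rho>"
    and "trace_norm (T_map d1 d2 2 (kron U (1\<^sub>m 2) * \<rho> * adj (kron U (1\<^sub>m 2)))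
      - kron ((1 / of_nat d1) \<cdot>\<^sub>m 1\<^sub>m d1) (ptrace_A (d1 * d2) 2 \<rho>)) = 1"
proof -
  define \<tau> where "\<tau> = correlated_state d1 d2"
  have V: "unitary (d1 * d2 * 2) (kron U (1\<^sub>m 2))"
    using unitary_kron_one[OF assms(3)] .
  have \<tau>: "\<tau> \<in> carrier_mat (d1 * d2 * 2) (d1 * d2 * 2)" "density (d1 * d2 * 2) \<tau>"
    using assms by (simp_all add: \<tau>_def density_def psd_correlated_state tr_correlated_state)
  show \<rho>: "density (d1 * d2 * 2) \<rho>"
    unfolding \<rho>_def \<tau>_def[symmetric] using density_unitary_congruence[OF \<tau>(2) V] .
  have "of_real (2 powr - (log 2 (d1 * d2) - 1)) \<cdot>\<^sub>m kron (1\<^sub>m (d1 * d2)) ((1 / of_nat 2) \<cdot>\<^sub>m 1\<^sub>m 2) - \<rho>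
      = (1 / of_nat (d1 * d2)) \<cdot>\<^sub>m 1\<^sub>m (d1 * d2 * 2) - \<rho>"
    using assms by (simp add: kron_one_smult_one smult_smult_mat powr_diff)
  also have "\<dots> = adj (kron U (1\<^sub>m 2)) * ((1 / of_nat (d1 * d2)) \<cdot>\<^sub>m 1\<^sub>m (d1 * d2 * 2) - \<tau>) * kron U (1\<^sub>m 2)"
    unfolding \<rho>_def \<tau>_def[symmetric] using smult_one_minus_unitary_congruence[OF V \<tau>(1)] .
  finally have "psd (d1 * d2 * 2)
      (of_real (2 powr - (log 2 (d1 * d2) - 1)) \<cdot>\<^sub>m kron (1\<^sub>m (d1 * d2)) ((1 / of_nat 2) \<cdot>\<^sub>m 1\<^sub>m 2) - \<rho>)"
    using psd_congruence[OF psd_scaled_one_minus_correlated_state] V by (simp add: \<tau>_def unitary_def)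
  then show "log 2 (d1 * d2) - 1 \<le> hmin (d1 * d2) 2 \<rho>"
    using assms \<rho> density_maximally_mixed[of 2]
    by (intro hmin_lower_bound) (auto simp: density_def psd_def)
  have "kron U (1\<^sub>m 2) * \<rho> * adj (kron U (1\<^sub>m 2)) = \<tau>"
    unfolding \<rho>_def \<tau>_def[symmetric] using unitary_congruence_inverse[OF V \<tau>(1)] .
  moreover have "ptrace_A (d1 * d2) 2 \<rho> = ptrace_A (d1 * d2) 2 \<tau>"
    unfolding \<rho>_def \<tau>_def[symmetric] using ptrace_A_unitary_congruence[OF assms(3) \<tau>(1)] .
  ultimately show "trace_norm (T_map d1 d2 2 (kron U (1\<^sub>m 2) * \<rho> * adj (kron U (1\<^sub>m 2)))
      - kron ((1 / of_nat d1) \<cdot>\<^sub>m 1\<^sub>m d1) (ptrace_A (d1 * d2) 2 \<rho>)) = 1"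
    using trace_norm_correlated_state[OF assms(1,2)] by (simp add: \<tau>_def)
qed

lemma qc_extractor_deviation_le:
  assumes "qc_extractor d1 d2 k \<epsilon> Us" and "density (d1 * d2 * dE) \<rho>" and "k \<le> hmin (d1 * d2) dE \<rho>"
    and "U \<in> set Us"
  shows "trace_norm (T_map d1 d2 dE (kron U (1\<^sub>m dE) * \<rho> * adj (kron U (1\<^sub>m dE)))
      - kron ((1 / of_nat d1) \<cdot>\<^sub>m 1\<^sub>m d1) (ptrace_A (d1 * d2) dE \<rho>)) \<le> real (length Us) * \<epsilon>"
proof -
  define f where "f V = trace_norm (T_map d1 d2 dE (kron V (1\<^sub>m dE) * \<rho> * adj (kron V (1\<^sub>m dE)))
      - kron ((1 / of_nat d1) \<cdot>\<^sub>m 1\<^sub>m d1) (ptrace_A (d1 * d2) dE \<rho>))" for V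
  have "(1 / real (length Us)) * (\<Sum>V\<leftarrow>Us. f V) \<le> \<epsilon>"
    using assms(1-3) unfolding qc_extractor_def f_def by auto
  moreover have "f U \<le> (\<Sum>V\<leftarrow>Us. f V)"
    using assms(4) by (intro member_le_sum_list) (auto simp: f_def trace_norm_nonneg)
  moreover have "length Us > 0"
    using assms(4) by auto
  ultimately show ?thesis
    unfolding f_def[symmetric] by (simp add: field_simps)
qed

theorem proposition7:
  fixes d1 d2 :: nat and k \<epsilon> :: real and Us :: "complex mat list"
  assumes "d1 \<ge> 2" and "d2 \<ge> 1"
    and "qc_extractor d1 d2 k \<epsilon> Us"
    and "k \<le> log 2 (real (d1 * d2)) - 1"
  shows "real (length Us) * \<epsilon> \<ge> 1"
proof -
  have "Us \<noteq> []" and "\<forall>U \<in> set Us. unitary (d1 * d2) U"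
    using assms(3) by (auto simp: qc_extractor_def)
  then have U: "hd Us \<in> set Us" "unitary (d1 * d2) (hd Us)"
    by simp_all
  have "d2 > 0" using assms(2) by simp
  note witness = correlated_state_witness[OF assms(1) this U(2)]
  have "k \<le> hmin (d1 * d2) 2 (adj (kron (hd Us) (1\<^sub>m 2)) * correlated_state d1 d2 * kron (hd Us) (1\<^sub>m 2))"
    using witness(2) assms(4) by simp
  from qc_extractor_deviation_le[OF assms(3) witness(1) this U(1)] witness(3)
  show ?thesis by simp
qed

end
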